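(* Let $\{K_n\}$ be Kraus operators of an incoherent operation with respect to $I$. For every density matrix $\rho$ on $\mathcal H$, setting $p_n=\mathrm{Tr}[K_n\rho K_n^\dagger]$ and $\rho_n=K_n\rho K_n^\dagger/p_n$ for $p_n>0$, we have $$R_I(\rho)\ \ge\ \sum_{n:\,p_n>0}p_n\,R_I(\rho_n).$$
   Context: Fix a Hilbert space $\mathcal H$ of finite dimension $d$ with a fixed orthonormal basis $I=\{|i\rangle\}_{i=1}^d$. The set $\mathcal I$ of incoherent states consists of all density matrices $\sum_{i}p_i|i\rangle\langle i|$ with $p_i\ge0$, $\sum_ip_i=1$. An incoherent operation is a CPTP map $\Phi(\rho)=\sum_nK_n\rho K_n^\dagger$ with $\sum_nK_n^\dagger K_n=\mathbb 1$ such that $K_n\delta K_n^\dagger$ is diagonal in the basis $I$ for every $\delta\in\mathcal I$ and every $n$. For a density matrix $\rho$, let $\rho^{\mathrm{diag}}=\sum_i\langle i|\rho|i\rangle\,|i\rangle\langle i|$. For a pure state $|\psi\rangle=\sum_ia_i|i\rangle$ define $R_I(|\psi\rangle)=S\big((|\psi\rangle\langle\psi|)^{\mathrm{diag}}\big)=-\sum_i|a_i|^2\log_2|a_i|^2$, where $S$ is the von Neumann entropy. For a general density matrix $\rho$ define $R_I(\rho)=\min\sum_ep_eR_I(|\psi_e\rangle)$, the minimum over all finite pure-state decompositions $\rho=\sum_ep_e|\psi_e\rangle\langle\psi_e|$ with $p_e>0$, $\sum_ep_e=1$. *)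

theory Defs
  imports "HOL-Analysis.Analysis" "Jordan_Normal_Form.Schur_Decomposition"
begin

text \<open>Hilbert space C^d with the standard (computational) basis |i>, i < d.
  Operators are d x d complex matrices; the adjoint is mat_adjoint.\<close>

definition mtrace :: "complex mat \<Rightarrow> complex" where
  "mtrace A = (\<Sum>i<dim_row A. A $$ (i,i))"

definition msum :: "nat \<Rightarrow> complex mat list \<Rightarrow> complex mat" where
  "msum d As = foldr (+) As (0\<^sub>m d d)"

definition psd_mat :: "nat \<Rightarrow> complex mat \<Rightarrow> bool" where
  "psd_mat d A \<longleftrightarrow> A \<in> carrier_mat d d \<and>
     (\<forall>v \<in> carrier_vec d. conjugate v \<bullet> (A *\<^sub>v v) \<in> \<real> \<and> Re (conjugate v \<bullet> (A *\<^sub>v v)) \<ge> 0)"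

definition density_mat :: "nat \<Rightarrow> complex mat \<Rightarrow> bool" where
  "density_mat d \<rho> \<longleftrightarrow> psd_mat d \<rho> \<and> mtrace \<rho> = 1"

definition incoherent_state :: "nat \<Rightarrow> complex mat \<Rightarrow> bool" where
  "incoherent_state d \<delta> \<longleftrightarrow> (\<exists>p :: nat \<Rightarrow> real. (\<forall>i<d. p i \<ge> 0) \<and> (\<Sum>i<d. p i) = 1 \<and>
     \<delta> = mat d d (\<lambda>(i,j). if i = j then complex_of_real (p i) else 0))"

definition incoherent_kraus :: "nat \<Rightarrow> complex mat list \<Rightarrow> bool" where
  "incoherent_kraus d Ks \<longleftrightarrow>
     (\<forall>K \<in> set Ks. K \<in> carrier_mat d d) \<and>
     msum d (map (\<lambda>K. mat_adjoint K * K) Ks) = 1\<^sub>m d \<and>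
     (\<forall>K \<in> set Ks. \<forall>\<delta>. incoherent_state d \<delta> \<longrightarrow> diagonal_mat (K * \<delta> * mat_adjoint K))"

definition proj :: "complex vec \<Rightarrow> complex mat" where
  "proj \<psi> = mat (dim_vec \<psi>) (dim_vec \<psi>) (\<lambda>(i,j). \<psi> $ i * cnj (\<psi> $ j))"

definition unit_vec_d :: "nat \<Rightarrow> complex vec \<Rightarrow> bool" where
  "unit_vec_d d \<psi> \<longleftrightarrow> \<psi> \<in> carrier_vec d \<and> (\<Sum>i<d. (cmod (\<psi> $ i))\<^sup>2) = 1"

text \<open>R_I of a pure state: entropy of its diagonal (convention 0 log 0 = 0; note log 2 0 = 0 in HOL).\<close>
definition RI_pure :: "complex vec \<Rightarrow> real" where
  "RI_pure \<psi> = - (\<Sum>i<dim_vec \<psi>. (cmod (\<psi> $ i))\<^sup>2 * log 2 ((cmod (\<psi> $ i))\<^sup>2))"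

definition pure_decomp :: "nat \<Rightarrow> complex mat \<Rightarrow> (real \<times> complex vec) list \<Rightarrow> bool" where
  "pure_decomp d \<rho> D \<longleftrightarrow>
     (\<forall>(p,\<psi>) \<in> set D. p > 0 \<and> unit_vec_d d \<psi>) \<and>
     (\<Sum>(p,\<psi>) \<leftarrow> D. p) = 1 \<and>
     \<rho> = msum d (map (\<lambda>(p,\<psi>). complex_of_real p \<cdot>\<^sub>m proj \<psi>) D)"

definition RI :: "nat \<Rightarrow> complex mat \<Rightarrow> real" where
  "RI d \<rho> = Inf {(\<Sum>(p,\<psi>) \<leftarrow> D. p * RI_pure \<psi>) | D. pure_decomp d \<rho> D}"

end

theory Submission
  imports Defs
begin

text \<open>Take any pure-state decomposition \<open>\<rho> = \<Sum>\<^sub>e p\<^sub>e |\<psi>\<^sub>e\<rangle>\<langle>\<psi>\<^sub>e|\<close>. The vectors \<open>K\<^sub>n\<psi>\<^sub>e\<close>, suitably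
  rescaled, decompose \<open>\<rho>\<^sub>n\<close>, so it suffices to prove the pure-state inequality
  \<open>\<Sum>\<^sub>n \<parallel>K\<^sub>n\<psi>\<parallel>\<^sup>2 R\<^sub>I(K\<^sub>n\<psi>/\<parallel>K\<^sub>n\<psi>\<parallel>) \<le> R\<^sub>I(\<psi>)\<close> and average it over \<open>e\<close>.
  Incoherence forces every column of \<open>K\<^sub>n\<close> to have at most one nonzero entry, so distinct
  outputs of \<open>K\<^sub>n\<close> are fed by disjoint sets of input amplitudes. Gibbs' inequality compares the
  output entropies with the logarithms of the largest input weights feeding them, and a
  layer-cake argument, using only \<open>\<Sum>\<^sub>n K\<^sub>n\<^sup>\<dagger>K\<^sub>n = 1\<close>, compares those with the input entropy.
  Existence of decompositions (needed for the infimum) comes from a Cholesky-type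
  Gram decomposition of the positive semidefinite \<open>\<rho>\<close>.\<close>

lemma msum_carrier:
  assumes "\<forall>A\<in>set As. A \<in> carrier_mat d d"
  shows "msum d As \<in> carrier_mat d d"
  using assms by (induction As) (auto simp: msum_def)

lemma index_msum:
  assumes "\<forall>A\<in>set As. A \<in> carrier_mat d d" "i < d" "j < d"
  shows "msum d As $$ (i,j) = (\<Sum>A\<leftarrow>As. A $$ (i,j))"
  using assms
proof (induction As)
  case (Cons A As)
  then have "msum d As \<in> carrier_mat d d" by (intro msum_carrier) auto
  with Cons show ?case by (simp add: msum_def)
qed (simp add: msum_def)

lemma mat_adjoint_carrier: "A \<in> carrier_mat n m \<Longrightarrow> mat_adjoint A \<in> carrier_mat m n"
  by (auto simp: mat_adjoint_def)

lemma index_mat_adjoint: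
  "A \<in> carrier_mat n m \<Longrightarrow> i < m \<Longrightarrow> j < n \<Longrightarrow> mat_adjoint A $$ (i,j) = cnj (A $$ (j,i))"
  by (auto simp: mat_adjoint_def mat_of_rows_def)

lemma index_mult_mat_sum:
  "A \<in> carrier_mat n m \<Longrightarrow> B \<in> carrier_mat m p \<Longrightarrow> i < n \<Longrightarrow> j < p \<Longrightarrow>
    (A * B) $$ (i,j) = (\<Sum>k<m. A $$ (i,k) * B $$ (k,j))"
  by (auto simp: scalar_prod_def lessThan_atLeast0 intro!: sum.cong)

lemma index_mult_adjoint:
  assumes "A \<in> carrier_mat d d" "B \<in> carrier_mat d d" "j < d" "k < d"
  shows "(A * B * mat_adjoint A) $$ (j,k) = (\<Sum>a<d. \<Sum>b<d. A $$ (j,a) * B $$ (a,b) * cnj (A $$ (k,b)))"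
proof -
  have "(A * B * mat_adjoint A) $$ (j,k) = (\<Sum>a<d. A $$ (j,a) * (\<Sum>b<d. B $$ (a,b) * cnj (A $$ (k,b))))"
    using assms mat_adjoint_carrier[OF assms(1)]
    by (simp add: index_mult_mat_sum[of _ d d _ d] index_mat_adjoint[OF assms(1)] del: index_mult_mat)
  then show ?thesis
    by (simp add: sum_distrib_left mult.assoc)
qed

lemma mtrace_smult: "A \<in> carrier_mat n n \<Longrightarrow> mtrace (c \<cdot>\<^sub>m A) = c * mtrace A"
  by (auto simp: mtrace_def sum_distrib_left intro!: sum.cong)

definition mat_apply :: "nat \<Rightarrow> complex mat \<Rightarrow> (nat \<Rightarrow> complex) \<Rightarrow> nat \<Rightarrow> complex" where
  "mat_apply d K x j = (\<Sum>i<d. K $$ (j,i) * x i)"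

definition sqnorm :: "nat \<Rightarrow> (nat \<Rightarrow> complex) \<Rightarrow> real" where
  "sqnorm d x = (\<Sum>i<d. (cmod (x i))\<^sup>2)"

definition normalize_vec :: "nat \<Rightarrow> (nat \<Rightarrow> complex) \<Rightarrow> complex vec" where
  "normalize_vec d v = vec d (\<lambda>i. v i / complex_of_real (sqrt (sqnorm d v)))"

text \<open>\<open>RI_scaled d v\<close> is \<open>\<parallel>v\<parallel>\<^sup>2 R\<^sub>I(v/\<parallel>v\<parallel>)\<close>; it is \<open>0\<close> for \<open>v = 0\<close>.\<close>
definition RI_scaled :: "nat \<Rightarrow> (nat \<Rightarrow> complex) \<Rightarrow> real" where
  "RI_scaled d v = sqnorm d v * RI_pure (normalize_vec d v)"

lemma sqnorm_nonneg: "0 \<le> sqnorm d v"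
  by (simp add: sqnorm_def sum_nonneg)

lemma sqnorm_eq_0_iff: "sqnorm d v = 0 \<longleftrightarrow> (\<forall>i<d. v i = 0)"
  by (auto simp: sqnorm_def sum_nonneg_eq_0_iff)

lemma sqnorm_pos_iff: "0 < sqnorm d v \<longleftrightarrow> sqnorm d v \<noteq> 0"
  using sqnorm_nonneg[of d v] by linarith

lemma dim_normalize_vec [simp]: "dim_vec (normalize_vec d v) = d"
  by (simp add: normalize_vec_def)

lemma sqnorm_normalize_vec:
  "0 < sqnorm d v \<Longrightarrow> i < d \<Longrightarrow> (cmod (normalize_vec d v $ i))\<^sup>2 = (cmod (v i))\<^sup>2 / sqnorm d v"
  by (simp add: normalize_vec_def norm_divide power_divide)

lemma log2_nonpos: "0 \<le> x \<Longrightarrow> x \<le> 1 \<Longrightarrow> log 2 x \<le> 0"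
  by (cases "x = 0") (simp_all add: log_def divide_nonpos_pos)

lemma RI_scaled_eq:
  "RI_scaled d v = (\<Sum>j<d. - (cmod (v j))\<^sup>2 * log 2 ((cmod (v j))\<^sup>2 / sqnorm d v))"
proof (cases "sqnorm d v = 0")
  case True
  then show ?thesis by (simp add: RI_scaled_def sqnorm_eq_0_iff)
next
  case False
  then show ?thesis
    by (simp add: RI_scaled_def RI_pure_def sqnorm_pos_iff sqnorm_normalize_vec sum_distrib_left sum_negf)
qed

lemma RI_scaled_nonneg: "0 \<le> RI_scaled d v"
proof -
  have "(cmod (v j))\<^sup>2 \<le> sqnorm d v" if "j < d" for j
    unfolding sqnorm_def using that by (intro member_le_sum) auto
  then have "log 2 ((cmod (v j))\<^sup>2 / sqnorm d v) \<le> 0" if "j < d" for j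
    using that sqnorm_nonneg[of d v] by (intro log2_nonpos) (auto simp: divide_le_eq_1)
  then show ?thesis
    unfolding RI_scaled_eq by (intro sum_nonneg) (simp add: mult_nonneg_nonpos)
qed

lemma RI_scaled_scale:
  assumes "0 \<le> c"
  shows "RI_scaled d (\<lambda>j. complex_of_real c * v j) = c\<^sup>2 * RI_scaled d v"
proof (cases "c = 0")
  case False
  then have "sqnorm d (\<lambda>j. complex_of_real c * v j) = c\<^sup>2 * sqnorm d v"
    by (simp add: sqnorm_def norm_mult power_mult_distrib sum_distrib_left)
  with False show ?thesis
    by (simp add: RI_scaled_eq norm_mult power_mult_distrib sum_distrib_left mult.assoc)
qed (simp add: RI_scaled_eq)

lemma RI_scaled_unit_vec: "unit_vec_d d \<psi> \<Longrightarrow> RI_scaled d (\<lambda>i. \<psi> $ i) = RI_pure \<psi>"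
proof -
  assume unit: "unit_vec_d d \<psi>"
  then have "sqnorm d (\<lambda>i. \<psi> $ i) = 1" by (simp add: unit_vec_d_def sqnorm_def)
  moreover have "normalize_vec d (\<lambda>i. \<psi> $ i) = \<psi>"
    using unit calculation by (auto simp: normalize_vec_def unit_vec_d_def)
  ultimately show ?thesis by (simp add: RI_scaled_def)
qed

lemma RI_pure_nonneg: "unit_vec_d d \<psi> \<Longrightarrow> 0 \<le> RI_pure \<psi>"
  using RI_scaled_nonneg RI_scaled_unit_vec by metis

definition kraus_family :: "nat \<Rightarrow> complex mat list \<Rightarrow> bool" where
  "kraus_family d Ks \<longleftrightarrow>
     (\<forall>K \<in> set Ks. K \<in> carrier_mat d d) \<and> msum d (map (\<lambda>K. mat_adjoint K * K) Ks) = 1\<^sub>m d"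

lemma incoherent_kraus_imp_kraus_family: "incoherent_kraus d Ks \<Longrightarrow> kraus_family d Ks"
  by (simp add: incoherent_kraus_def kraus_family_def)

lemma kraus_family_carrier: "kraus_family d Ks \<Longrightarrow> n < length Ks \<Longrightarrow> Ks ! n \<in> carrier_mat d d"
  by (simp add: kraus_family_def)

text \<open>Apply incoherence to the state \<open>|i\<rangle>\<langle>i|\<close>.\<close>
lemma incoherent_kraus_column:
  assumes "incoherent_kraus d Ks" "K \<in> set Ks" "i < d" "j < d" "j' < d"
    and "K $$ (j,i) \<noteq> 0" "K $$ (j',i) \<noteq> 0"
  shows "j = j'"
proof (rule ccontr)
  assume "j \<noteq> j'"
  have K: "K \<in> carrier_mat d d" using assms(1,2) by (simp add: incoherent_kraus_def)
  define \<delta> where "\<delta> = mat d d (\<lambda>(a,b). if a = b then complex_of_real (if a = i then 1 else 0) else 0)"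
  have "incoherent_state d \<delta>"
    unfolding incoherent_state_def \<delta>_def using assms(3)
    by (intro exI[of _ "\<lambda>a. if a = i then 1 else 0"]) auto
  then have "diagonal_mat (K * \<delta> * mat_adjoint K)"
    using assms(1,2) by (simp add: incoherent_kraus_def)
  then have zero: "(K * \<delta> * mat_adjoint K) $$ (j,j') = 0"
    using \<open>j \<noteq> j'\<close> assms(4,5) K by (simp add: diagonal_mat_def mat_adjoint_def)
  have column: "(\<Sum>b<d. K $$ (j,a) * \<delta> $$ (a,b) * cnj (K $$ (j',b))) =
      (if a = i then K $$ (j,a) * cnj (K $$ (j',a)) else 0)" if "a < d" for a
    using that by (simp add: \<delta>_def if_distrib[of "\<lambda>z. _ * z * _"] cong: if_cong)
  have "\<delta> \<in> carrier_mat d d" by (simp add: \<delta>_def)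
  then have "(K * \<delta> * mat_adjoint K) $$ (j,j') =
      (\<Sum>a<d. \<Sum>b<d. K $$ (j,a) * \<delta> $$ (a,b) * cnj (K $$ (j',b)))"
    using K assms(4,5) by (intro index_mult_adjoint)
  also have "\<dots> = K $$ (j,i) * cnj (K $$ (j',i))"
    using assms(3) by (simp add: column)
  finally have "(K * \<delta> * mat_adjoint K) $$ (j,j') = K $$ (j,i) * cnj (K $$ (j',i))" .
  with zero show False using assms(6,7) by simp
qed

lemma kraus_family_completeness:
  assumes "kraus_family d Ks" "i < d" "k < d"
  shows "(\<Sum>n<length Ks. \<Sum>j<d. cnj (Ks!n $$ (j,i)) * Ks!n $$ (j,k)) = (if i = k then 1 else 0)"
proof -
  have carrier: "\<forall>A\<in>set (map (\<lambda>K. mat_adjoint K * K) Ks). A \<in> carrier_mat d d"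
    using assms(1) by (auto simp: kraus_family_def intro!: mult_carrier_mat mat_adjoint_carrier)
  have "(if i = k then 1 else 0) = msum d (map (\<lambda>K. mat_adjoint K * K) Ks) $$ (i,k)"
    using assms by (simp add: kraus_family_def)
  also have "\<dots> = (\<Sum>n<length Ks. (mat_adjoint (Ks!n) * Ks!n) $$ (i,k))"
    using assms(2,3) by (simp add: index_msum[OF carrier] sum_list_sum_nth lessThan_atLeast0)
  also have "\<dots> = (\<Sum>n<length Ks. \<Sum>j<d. cnj (Ks!n $$ (j,i)) * Ks!n $$ (j,k))"
  proof (rule sum.cong[OF refl])
    fix n assume "n \<in> {..<length Ks}"
    then have K: "Ks!n \<in> carrier_mat d d" using assms(1) kraus_family_carrier by blast
    then show "(mat_adjoint (Ks!n) * Ks!n) $$ (i,k) = (\<Sum>j<d. cnj (Ks!n $$ (j,i)) * Ks!n $$ (j,k))"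
      using assms(2,3) mat_adjoint_carrier[OF K]
      by (simp add: index_mult_mat_sum[of _ d d _ d] index_mat_adjoint[OF K] del: index_mult_mat)
  qed
  finally show ?thesis ..
qed

lemma of_real_cmod_square: "complex_of_real ((cmod z)\<^sup>2) = cnj z * z"
  by (simp only: complex_norm_square mult.commute)

lemma sqnorm_mat_apply:
  "complex_of_real (sqnorm d (mat_apply d K x)) =
    (\<Sum>i<d. \<Sum>k<d. cnj (x i) * x k * (\<Sum>j<d. cnj (K $$ (j,i)) * K $$ (j,k)))"
proof -
  have "complex_of_real (sqnorm d (mat_apply d K x)) =
      (\<Sum>j<d. cnj (\<Sum>i<d. K $$ (j,i) * x i) * (\<Sum>k<d. K $$ (j,k) * x k))"
    unfolding sqnorm_def mat_apply_def of_real_sum of_real_cmod_square ..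
  also have "\<dots> = (\<Sum>j<d. \<Sum>i<d. \<Sum>k<d. cnj (x i) * x k * (cnj (K $$ (j,i)) * K $$ (j,k)))"
  proof (rule sum.cong[OF refl])
    fix j
    show "cnj (\<Sum>i<d. K $$ (j,i) * x i) * (\<Sum>k<d. K $$ (j,k) * x k) =
        (\<Sum>i<d. \<Sum>k<d. cnj (x i) * x k * (cnj (K $$ (j,i)) * K $$ (j,k)))"
      by (simp add: sum_product sum_distrib_left sum_distrib_right mult_ac)
  qed
  also have "\<dots> = (\<Sum>i<d. \<Sum>j<d. \<Sum>k<d. cnj (x i) * x k * (cnj (K $$ (j,i)) * K $$ (j,k)))"
    by (rule sum.swap)
  also have "\<dots> = (\<Sum>i<d. \<Sum>k<d. \<Sum>j<d. cnj (x i) * x k * (cnj (K $$ (j,i)) * K $$ (j,k)))"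
    by (rule sum.cong[OF refl]) (rule sum.swap)
  finally show ?thesis by (simp add: sum_distrib_left)
qed

lemma kraus_family_sqnorm:
  assumes "kraus_family d Ks"
  shows "(\<Sum>n<length Ks. sqnorm d (mat_apply d (Ks!n) x)) = sqnorm d x"
proof -
  let ?c = "\<lambda>i k n. \<Sum>j<d. cnj (Ks!n $$ (j,i)) * Ks!n $$ (j,k)"
  have "complex_of_real (\<Sum>n<length Ks. sqnorm d (mat_apply d (Ks!n) x)) =
      (\<Sum>n<length Ks. \<Sum>i<d. \<Sum>k<d. cnj (x i) * x k * ?c i k n)"
    unfolding of_real_sum sqnorm_mat_apply ..
  also have "\<dots> = (\<Sum>i<d. \<Sum>n<length Ks. \<Sum>k<d. cnj (x i) * x k * ?c i k n)"
    by (rule sum.swap)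
  also have "\<dots> = (\<Sum>i<d. \<Sum>k<d. \<Sum>n<length Ks. cnj (x i) * x k * ?c i k n)"
    by (rule sum.cong[OF refl]) (rule sum.swap)
  also have "\<dots> = (\<Sum>i<d. \<Sum>k<d. cnj (x i) * x k * (\<Sum>n<length Ks. ?c i k n))"
    unfolding sum_distrib_left ..
  also have "\<dots> = (\<Sum>i<d. cnj (x i) * x i)"
    by (simp add: kraus_family_completeness[OF assms] if_distrib cong: if_cong)
  also have "\<dots> = complex_of_real (sqnorm d x)"
    unfolding sqnorm_def of_real_sum of_real_cmod_square ..
  finally show ?thesis by (simp only: of_real_eq_iff)
qed

lemma kraus_family_mass_le:
  assumes "kraus_family d Ks"
    and "\<And>n j i. n < length Ks \<Longrightarrow> j \<in> J n \<Longrightarrow> i < d \<Longrightarrow> Ks!n $$ (j,i) \<noteq> 0 \<Longrightarrow> x i \<noteq> 0 \<Longrightarrow> i \<in> T"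
  shows "(\<Sum>n<length Ks. \<Sum>j\<in>{..<d} \<inter> J n. (cmod (mat_apply d (Ks!n) x j))\<^sup>2)
    \<le> (\<Sum>i\<in>{..<d} \<inter> T. (cmod (x i))\<^sup>2)"
proof -
  define y where "y i = (if i \<in> T then x i else 0)" for i
  have "mat_apply d (Ks!n) x j = mat_apply d (Ks!n) y j" if "n < length Ks" "j \<in> J n" for n j
    unfolding mat_apply_def y_def using assms(2)[OF that] by (intro sum.cong refl) fastforce
  then have "(\<Sum>n<length Ks. \<Sum>j\<in>{..<d} \<inter> J n. (cmod (mat_apply d (Ks!n) x j))\<^sup>2)
      = (\<Sum>n<length Ks. \<Sum>j\<in>{..<d} \<inter> J n. (cmod (mat_apply d (Ks!n) y j))\<^sup>2)"
    by (intro sum.cong refl) auto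
  also have "\<dots> \<le> (\<Sum>n<length Ks. sqnorm d (mat_apply d (Ks!n) y))"
    unfolding sqnorm_def by (intro sum_mono sum_mono2) auto
  also have "\<dots> = sqnorm d y"
    by (rule kraus_family_sqnorm[OF assms(1)])
  also have "\<dots> = (\<Sum>i\<in>{..<d} \<inter> T. (cmod (x i))\<^sup>2)"
    unfolding sqnorm_def sum.inter_restrict[OF finite_lessThan] y_def by (intro sum.cong) auto
  finally show ?thesis .
qed

section \<open>The pure-state inequality\<close>

lemma has_integral_indicator_interval:
  "(v::real) \<ge> 0 \<Longrightarrow> ((\<lambda>s. if s \<in> {0..v} then 1 else 0) has_integral v) UNIV"
  using has_integral_restrict_UNIV[of "{0..v}" "\<lambda>_. 1::real" v] has_integral_const_real[of "1::real" 0 v]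
  by (simp add: if_distrib)

text \<open>Layer-cake comparison: both sides are integrals over \<open>s \<ge> 0\<close> of the masses of the
  level sets \<open>{w \<ge> s}\<close> and \<open>{u \<ge> s}\<close>.\<close>
lemma sum_mult_le_of_level_sets_le:
  fixes m w :: "'a \<Rightarrow> real" and m' u :: "'b \<Rightarrow> real"
  assumes "finite A" "finite B" "\<forall>x\<in>A. w x \<ge> 0" "\<forall>y\<in>B. u y \<ge> 0"
    and level: "\<And>s. s \<ge> 0 \<Longrightarrow> (\<Sum>x\<in>{x\<in>A. s \<le> w x}. m x) \<le> (\<Sum>y\<in>{y\<in>B. s \<le> u y}. m' y)"
  shows "(\<Sum>x\<in>A. m x * w x) \<le> (\<Sum>y\<in>B. m' y * u y)"
proof (rule has_integral_le)
  show "((\<lambda>s. \<Sum>x\<in>A. m x * (if s \<in> {0..w x} then 1 else 0)) has_integral (\<Sum>x\<in>A. m x * w x)) UNIV"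
    using assms(3) by (intro has_integral_sum[OF assms(1)] has_integral_mult_right has_integral_indicator_interval) auto
  show "((\<lambda>s. \<Sum>y\<in>B. m' y * (if s \<in> {0..u y} then 1 else 0)) has_integral (\<Sum>y\<in>B. m' y * u y)) UNIV"
    using assms(4) by (intro has_integral_sum[OF assms(2)] has_integral_mult_right has_integral_indicator_interval) auto
  fix s :: real
  show "(\<Sum>x\<in>A. m x * (if s \<in> {0..w x} then 1 else 0)) \<le> (\<Sum>y\<in>B. m' y * (if s \<in> {0..u y} then 1 else 0))"
    using level[of s] assms(1,2) by (cases "s \<ge> 0") (simp_all add: sum.inter_filter[symmetric] if_distrib cong: if_cong)
qed

lemma log2_le_linear: "0 < y \<Longrightarrow> log 2 y \<le> (y - 1) / ln 2"
  using ln_le_minus_one[of y] by (simp add: log_def divide_right_mono)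

lemma gibbs_inequality:
  fixes b r :: "'a \<Rightarrow> real"
  assumes "finite A" "\<forall>j\<in>A. 0 \<le> b j" "\<forall>j\<in>A. 0 \<le> r j" "sum r A \<le> 1"
    and "\<forall>j\<in>A. 0 < b j \<longrightarrow> 0 < r j"
  shows "(\<Sum>j\<in>A. - b j * log 2 (b j / sum b A)) \<le> (\<Sum>j\<in>A. - b j * log 2 (r j))"
proof (cases "sum b A = 0")
  case True
  then have "\<forall>j\<in>A. b j = 0" using assms(1,2) sum_nonneg_eq_0_iff by blast
  then show ?thesis by simp
next
  case False
  define q where "q = sum b A"
  have q: "0 < q" using False assms(2) sum_nonneg[of A b] unfolding q_def by force
  have termwise: "- b j * log 2 (b j / q) \<le> - b j * log 2 (r j) + (q * r j - b j) / ln 2" if "j \<in> A" for j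
  proof (cases "b j = 0")
    case True
    then show ?thesis using q assms(3) that by simp
  next
    case False
    then have b: "0 < b j" and r: "0 < r j" using assms(2,5) that by force+
    have "- b j * log 2 (b j / q) + b j * log 2 (r j) = b j * log 2 (q * r j / b j)"
      using b r q by (simp add: log_mult log_divide algebra_simps)
    also have "\<dots> \<le> b j * ((q * r j / b j - 1) / ln 2)"
      using b r q by (intro mult_left_mono log2_le_linear) auto
    also have "\<dots> = (q * r j - b j) / ln 2"
      using b by (simp add: field_simps)
    finally show ?thesis by simp
  qed
  have "(\<Sum>j\<in>A. - b j * log 2 (b j / q)) \<le> (\<Sum>j\<in>A. - b j * log 2 (r j) + (q * r j - b j) / ln 2)"
    using termwise by (rule sum_mono)
  also have "\<dots> = (\<Sum>j\<in>A. - b j * log 2 (r j)) + q * (sum r A - 1) / ln 2"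
    by (simp add: sum.distrib sum_divide_distrib[symmetric] sum_subtractf sum_distrib_left
        sum_negf q_def right_diff_distrib)
  also have "\<dots> \<le> (\<Sum>j\<in>A. - b j * log 2 (r j))"
    using q assms(4) by (simp add: mult_nonneg_nonpos divide_nonpos_pos)
  finally show ?thesis unfolding q_def .
qed

definition support_max :: "nat \<Rightarrow> complex mat \<Rightarrow> (nat \<Rightarrow> real) \<Rightarrow> nat \<Rightarrow> real" where
  "support_max d K a j = Max (insert 0 (a ` {i. i < d \<and> K $$ (j,i) \<noteq> 0}))"

lemma support_max_nonneg: "0 \<le> support_max d K a j"
  by (simp add: support_max_def)

lemma support_max_ge: "i < d \<Longrightarrow> K $$ (j,i) \<noteq> 0 \<Longrightarrow> a i \<le> support_max d K a j"
  unfolding support_max_def by (intro Max_ge) auto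

lemma support_max_le: "\<forall>i<d. a i \<le> c \<Longrightarrow> 0 \<le> c \<Longrightarrow> support_max d K a j \<le> c"
  by (simp add: support_max_def)

lemma support_max_pos:
  assumes "mat_apply d K x j \<noteq> 0"
  shows "0 < support_max d K (\<lambda>i. (cmod (x i))\<^sup>2) j"
proof -
  obtain i where i: "i < d" "K $$ (j,i) \<noteq> 0" and "x i \<noteq> 0"
    using assms unfolding mat_apply_def by (metis (no_types, lifting) lessThan_iff mult_eq_0_iff sum.neutral)
  then have "0 < (cmod (x i))\<^sup>2" by simp
  also have "\<dots> \<le> support_max d K (\<lambda>i. (cmod (x i))\<^sup>2) j"
    using support_max_ge[OF i] .
  finally show ?thesis .
qed

text \<open>Since each column of an incoherent Kraus operator meets at most one row, the supports
  indexed by the rows \<open>j\<close> are disjoint.\<close>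
lemma incoherent_kraus_sum_support_max_le:
  assumes "incoherent_kraus d Ks" "K \<in> set Ks" "\<forall>i. 0 \<le> a i"
  shows "(\<Sum>j<d. support_max d K a j) \<le> (\<Sum>i<d. a i)"
proof -
  have rows: "card {j. j < d \<and> K $$ (j,i) \<noteq> 0} \<le> 1" if "i < d" for i
    using incoherent_kraus_column[OF assms(1,2) that] unfolding One_nat_def
    by (subst card_le_Suc0_iff_eq) auto
  have "support_max d K a j \<le> (\<Sum>i | i < d \<and> K $$ (j,i) \<noteq> 0. a i)" for j
    unfolding support_max_def using assms(3) by (auto simp: Max_le_iff intro: member_le_sum sum_nonneg)
  then have "(\<Sum>j<d. support_max d K a j) \<le> (\<Sum>j<d. \<Sum>i<d. if K $$ (j,i) \<noteq> 0 then a i else 0)"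
    by (intro sum_mono) (simp add: sum.If_cases Collect_conj_eq Int_commute lessThan_def)
  also have "\<dots> = (\<Sum>i<d. real (card {j. j < d \<and> K $$ (j,i) \<noteq> 0}) * a i)"
    by (subst sum.swap) (simp add: sum.If_cases Collect_conj_eq Int_commute lessThan_def)
  also have "\<dots> \<le> (\<Sum>i<d. a i)"
    using rows assms(3) by (intro sum_mono) (simp add: mult_left_le_one_le)
  finally show ?thesis .
qed

lemma incoherent_kraus_RI_scaled_le_support_max:
  assumes "incoherent_kraus d Ks" "K \<in> set Ks" "sqnorm d x = 1"
  shows "RI_scaled d (mat_apply d K x)
    \<le> (\<Sum>j<d. (cmod (mat_apply d K x j))\<^sup>2 * - log 2 (support_max d K (\<lambda>i. (cmod (x i))\<^sup>2) j))"
  using gibbs_inequality[of "{..<d}" "\<lambda>j. (cmod (mat_apply d K x j))\<^sup>2" "support_max d K (\<lambda>i. (cmod (x i))\<^sup>2)"]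
    incoherent_kraus_sum_support_max_le[OF assms(1,2), of "\<lambda>i. (cmod (x i))\<^sup>2"] assms(3) support_max_pos
  by (simp add: RI_scaled_eq sqnorm_def support_max_nonneg)

text \<open>An output whose largest feeding weight is at most \<open>2\<^sup>-\<^sup>s\<close> is fed only by inputs of weight at
  most \<open>2\<^sup>-\<^sup>s\<close>, so by norm preservation these outputs carry at most the mass of those inputs.\<close>
lemma incoherent_kraus_level_mass_le:
  fixes x :: "nat \<Rightarrow> complex"
  assumes kraus: "incoherent_kraus d Ks"
  defines "a \<equiv> \<lambda>i. (cmod (x i))\<^sup>2"
  shows "(\<Sum>n<length Ks. \<Sum>j\<in>{..<d} \<inter> {j. s \<le> - log 2 (support_max d (Ks!n) a j)}.
      (cmod (mat_apply d (Ks!n) x j))\<^sup>2) \<le> (\<Sum>i\<in>{..<d} \<inter> {i. s \<le> - log 2 (a i)}. a i)"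
  unfolding a_def
proof (rule kraus_family_mass_le[OF incoherent_kraus_imp_kraus_family[OF kraus]])
  fix n j i assume j: "j \<in> {j. s \<le> - log 2 (support_max d (Ks!n) (\<lambda>i. (cmod (x i))\<^sup>2) j)}"
    and i: "i < d" "Ks!n $$ (j,i) \<noteq> 0" "x i \<noteq> 0"
  have "log 2 ((cmod (x i))\<^sup>2) \<le> log 2 (support_max d (Ks!n) (\<lambda>i. (cmod (x i))\<^sup>2) j)"
    using support_max_ge[OF i(1,2), of "\<lambda>i. (cmod (x i))\<^sup>2"] i(3) by (intro log_mono) auto
  with j show "i \<in> {i. s \<le> - log 2 ((cmod (x i))\<^sup>2)}" by simp
qed

lemma incoherent_kraus_RI_scaled_le:
  assumes kraus: "incoherent_kraus d Ks" and unit: "sqnorm d x = 1"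
  shows "(\<Sum>n<length Ks. RI_scaled d (mat_apply d (Ks!n) x)) \<le> RI_scaled d x"
proof -
  define N where "N = length Ks"
  define a where "a i = (cmod (x i))\<^sup>2" for i
  define b where "b n j = (cmod (mat_apply d (Ks!n) x j))\<^sup>2" for n j
  define w where "w n j = - log 2 (support_max d (Ks!n) a j)" for n j
  have a_nonneg: "0 \<le> a i" for i by (simp add: a_def)
  have a_le_1: "a i \<le> 1" if "i < d" for i
    using member_le_sum[of i "{..<d}" a] a_nonneg unit that by (simp add: a_def sqnorm_def)
  have w_nonneg: "0 \<le> w n j" for n j
    using a_le_1 by (simp add: w_def log2_nonpos support_max_le support_max_nonneg)
  have "{p \<in> {..<N} \<times> {..<d}. s \<le> w (fst p) (snd p)} = Sigma {..<N} (\<lambda>n. {..<d} \<inter> {j. s \<le> w n j})" for s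
    by auto
  then have level: "(\<Sum>p\<in>{p \<in> {..<N} \<times> {..<d}. s \<le> w (fst p) (snd p)}. b (fst p) (snd p))
      \<le> (\<Sum>i\<in>{i \<in> {..<d}. s \<le> - log 2 (a i)}. a i)" for s
    using incoherent_kraus_level_mass_le[OF kraus, of x s]
    by (simp add: sum.Sigma split_def N_def a_def[abs_def] b_def w_def Collect_conj_eq Int_commute lessThan_def)
  have "(\<Sum>n<N. RI_scaled d (mat_apply d (Ks!n) x)) \<le> (\<Sum>n<N. \<Sum>j<d. b n j * w n j)"
    using incoherent_kraus_RI_scaled_le_support_max[OF kraus _ unit]
    by (intro sum_mono) (simp add: N_def b_def w_def a_def[abs_def])
  also have "\<dots> = (\<Sum>p\<in>{..<N} \<times> {..<d}. b (fst p) (snd p) * w (fst p) (snd p))"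
    by (simp add: sum.cartesian_product split_def)
  also have "\<dots> \<le> (\<Sum>i<d. a i * - log 2 (a i))"
    using level w_nonneg a_nonneg a_le_1
    by (intro sum_mult_le_of_level_sets_le) (auto intro!: log2_nonpos)
  also have "\<dots> = RI_scaled d x"
    using unit by (simp add: RI_scaled_eq a_def)
  finally show ?thesis unfolding N_def .
qed

section \<open>Gram decomposition of positive semidefinite forms\<close>

definition sesq_form :: "nat \<Rightarrow> (nat \<Rightarrow> nat \<Rightarrow> complex) \<Rightarrow> (nat \<Rightarrow> complex) \<Rightarrow> (nat \<Rightarrow> complex) \<Rightarrow> complex" where
  "sesq_form d R x y = (\<Sum>a<d. \<Sum>b<d. cnj (x a) * R a b * y b)"

definition psd_form :: "nat \<Rightarrow> (nat \<Rightarrow> nat \<Rightarrow> complex) \<Rightarrow> bool" where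
  "psd_form d R \<longleftrightarrow> (\<forall>x. sesq_form d R x x \<in> \<real> \<and> 0 \<le> Re (sesq_form d R x x))"

definition basis_fun :: "nat \<Rightarrow> nat \<Rightarrow> complex" where
  "basis_fun t c = (if c = t then 1 else 0)"

lemma sesq_form_add_smult:
  "sesq_form d R (\<lambda>c. x c + \<beta> * y c) (\<lambda>c. x c + \<beta> * y c) =
    sesq_form d R x x + \<beta> * sesq_form d R x y + cnj \<beta> * sesq_form d R y x + cnj \<beta> * \<beta> * sesq_form d R y y"
proof -
  have "cnj (x a + \<beta> * y a) * R a b * (x b + \<beta> * y b) =
      cnj (x a) * R a b * x b + \<beta> * (cnj (x a) * R a b * y b) + cnj \<beta> * (cnj (y a) * R a b * x b)
      + cnj \<beta> * \<beta> * (cnj (y a) * R a b * y b)" for a b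
    by (simp add: algebra_simps)
  then show ?thesis
    by (simp add: sesq_form_def sum.distrib sum_distrib_left)
qed

lemma sum_basis_fun_mult: "t < d \<Longrightarrow> (\<Sum>a<d. basis_fun t a * F a) = F t"
  by (simp add: basis_fun_def if_distrib[of "\<lambda>z. z * _"] cong: if_cong)

lemma sum_mult_basis_fun: "t < d \<Longrightarrow> (\<Sum>a<d. F a * basis_fun t a) = F t"
  by (simp add: basis_fun_def if_distrib[of "\<lambda>z. _ * z"] cong: if_cong)

lemma cnj_basis_fun [simp]: "cnj (basis_fun t c) = basis_fun t c"
  by (simp add: basis_fun_def)

lemma sesq_form_basis_left: "t < d \<Longrightarrow> sesq_form d R (basis_fun t) y = (\<Sum>b<d. R t b * y b)"
  unfolding sesq_form_def cnj_basis_fun mult.assoc sum_distrib_left[symmetric]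
  by (rule sum_basis_fun_mult)

lemma sesq_form_basis_right: "t < d \<Longrightarrow> sesq_form d R x (basis_fun t) = (\<Sum>a<d. cnj (x a) * R a t)"
  unfolding sesq_form_def
  by (intro sum.cong refl) (simp add: sum_mult_basis_fun)

lemma sesq_form_basis: "s < d \<Longrightarrow> t < d \<Longrightarrow> sesq_form d R (basis_fun s) (basis_fun t) = R s t"
  by (simp add: sesq_form_basis_left sum_mult_basis_fun)

lemma psd_formD:
  assumes "psd_form d R"
  shows "sesq_form d R x x \<in> \<real>" "0 \<le> Re (sesq_form d R x x)"
  using assms by (simp_all add: psd_form_def)

lemma psd_form_diag:
  assumes "psd_form d R" "t < d"
  shows "R t t \<in> \<real>" "0 \<le> Re (R t t)"
  using psd_formD[OF assms(1), of "basis_fun t"] by (simp_all add: sesq_form_basis assms(2))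

lemma psd_form_hermitian:
  assumes "psd_form d R" "a < d" "b < d"
  shows "R a b = cnj (R b a)"
proof (cases "a = b")
  case True
  then show ?thesis using psd_form_diag[OF assms(1,2)] by (simp add: Reals_cnj_iff)
next
  case False
  have expand: "sesq_form d R (\<lambda>c. basis_fun a c + \<beta> * basis_fun b c) (\<lambda>c. basis_fun a c + \<beta> * basis_fun b c)
      = R a a + \<beta> * R a b + cnj \<beta> * R b a + cnj \<beta> * \<beta> * R b b" for \<beta>
    using assms(2,3) by (simp add: sesq_form_add_smult sesq_form_basis)
  have "R a a + R a b + R b a + R b b \<in> \<real>"
    using psd_formD(1)[OF assms(1), of "\<lambda>c. basis_fun a c + 1 * basis_fun b c"] expand[of 1] by simp
  moreover have "R a a + \<i> * R a b - \<i> * R b a + R b b \<in> \<real>"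
  proof -
    have "R a a + \<i> * R a b - \<i> * R b a + R b b = R a a + \<i> * R a b + cnj \<i> * R b a + cnj \<i> * \<i> * R b b"
      by simp
    then show ?thesis
      using psd_formD(1)[OF assms(1), of "\<lambda>c. basis_fun a c + \<i> * basis_fun b c"] expand[of \<i>] by simp
  qed
  moreover have "Im (R a a) = 0" "Im (R b b) = 0"
    using psd_form_diag(1)[OF assms(1)] assms(2,3) by (simp_all add: complex_is_Real_iff)
  ultimately show ?thesis by (auto simp: complex_is_Real_iff complex_eq_iff)
qed

text \<open>At \<open>x = e\<^sub>b - s R\<^sub>t\<^sub>b e\<^sub>t\<close> the form equals \<open>R\<^sub>b\<^sub>b - 2s\<bar>R\<^sub>b\<^sub>t\<bar>\<^sup>2\<close>, negative for large \<open>s\<close>.\<close>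
lemma psd_form_zero_diag:
  assumes "psd_form d R" "t < d" "R t t = 0" "b < d"
  shows "R b t = 0"
proof (rule ccontr)
  define z where "z = R b t"
  assume "R b t \<noteq> 0"
  then have z: "0 < cmod z" by (simp add: z_def)
  define s where "s = (Re (R b b) + 1) / (2 * (cmod z)\<^sup>2)"
  define \<beta> where "\<beta> = - complex_of_real s * cnj z"
  have "sesq_form d R (\<lambda>c. basis_fun b c + \<beta> * basis_fun t c) (\<lambda>c. basis_fun b c + \<beta> * basis_fun t c)
      = R b b + \<beta> * z + cnj \<beta> * cnj z"
    using assms psd_form_hermitian[OF assms(1,2,4)]
    by (simp add: sesq_form_add_smult sesq_form_basis z_def)
  also have "\<dots> = R b b - complex_of_real (2 * s * (cmod z)\<^sup>2)"
    by (simp add: \<beta>_def complex_norm_square[symmetric] algebra_simps)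
  finally have "0 \<le> Re (R b b) - 2 * s * (cmod z)\<^sup>2"
    using psd_formD(2)[OF assms(1)] by (metis Re_complex_of_real minus_complex.sel)
  moreover have "2 * s * (cmod z)\<^sup>2 = Re (R b b) + 1"
    using z by (simp add: s_def)
  ultimately show False by simp
qed

text \<open>The Schur complement form at \<open>x\<close> is the original form at \<open>x - (\<Sum>\<^sub>b R\<^sub>t\<^sub>b x\<^sub>b / R\<^sub>t\<^sub>t) e\<^sub>t\<close>.\<close>
lemma psd_form_schur_complement:
  assumes "psd_form d R" "t < d" "R t t \<noteq> 0"
  shows "psd_form d (\<lambda>a b. R a b - R a t * R t b / R t t)"
  unfolding psd_form_def
proof
  fix x
  define \<rho> where "\<rho> = (\<Sum>b<d. R t b * x b)"
  define \<beta> where "\<beta> = - \<rho> / R t t"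
  have \<sigma>: "(\<Sum>a<d. cnj (x a) * R a t) = cnj \<rho>"
    using psd_form_hermitian[OF assms(1) _ assms(2)] by (simp add: \<rho>_def mult.commute)
  have Rtt: "cnj (R t t) = R t t"
    using psd_form_diag(1)[OF assms(1,2)] by (simp add: Reals_cnj_iff)
  have "sesq_form d (\<lambda>a b. R a b - R a t * R t b / R t t) x x
      = sesq_form d R x x - (\<Sum>a<d. \<Sum>b<d. cnj (x a) * R a t * (R t b * x b) / R t t)"
    unfolding sesq_form_def sum_subtractf[symmetric] by (intro sum.cong refl) (simp add: algebra_simps)
  also have "\<dots> = sesq_form d R x x - (\<Sum>a<d. cnj (x a) * R a t) * \<rho> / R t t"
    unfolding \<rho>_def by (simp add: sum_product sum_divide_distrib)
  also have "\<dots> = sesq_form d R x x - cnj \<rho> * \<rho> / R t t"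
    by (simp only: \<sigma>)
  also have "\<dots> = sesq_form d R (\<lambda>c. x c + \<beta> * basis_fun t c) (\<lambda>c. x c + \<beta> * basis_fun t c)"
    unfolding sesq_form_add_smult sesq_form_basis[OF assms(2,2)] using assms(2,3) Rtt
    by (simp add: sesq_form_basis_left sesq_form_basis_right \<sigma> flip: \<rho>_def)
      (simp add: \<beta>_def field_simps)
  finally show "sesq_form d (\<lambda>a b. R a b - R a t * R t b / R t t) x x \<in> \<real> \<and>
      0 \<le> Re (sesq_form d (\<lambda>a b. R a b - R a t * R t b / R t t) x x)"
    using psd_formD[OF assms(1)] by simp
qed

lemma psd_form_pivot_outer:
  assumes "psd_form d R" "t < d" "b < d"
  shows "R a t / complex_of_real (sqrt (Re (R t t))) * cnj (R b t / complex_of_real (sqrt (Re (R t t))))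
    = R a t * R t b / R t t"
proof -
  have Rtt: "R t t = complex_of_real (Re (R t t))" "0 \<le> Re (R t t)"
    using psd_form_diag[OF assms(1,2)] by (simp_all add: complex_is_Real_iff complex_eq_iff)
  have "(complex_of_real (sqrt (Re (R t t))))\<^sup>2 = R t t"
    using Rtt by (metis of_real_power real_sqrt_pow2)
  moreover have "cnj (R b t) = R t b"
    using psd_form_hermitian[OF assms(1,2,3)] by simp
  ultimately show ?thesis
    by (simp add: power2_eq_square)
qed

text \<open>Cholesky-type elimination over the trailing \<open>m \<times> m\<close> block: a zero pivot \<open>R\<^sub>t\<^sub>t\<close> forces a zero
  row and column; otherwise the rank-one form \<open>R\<^sub>a\<^sub>t R\<^sub>t\<^sub>b / R\<^sub>t\<^sub>t\<close> splits off, leaving the Schur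
  complement.\<close>
lemma psd_form_gram_trailing_block:
  assumes "m \<le> d" "psd_form d R" "\<forall>a<d. \<forall>b<d. (a < d - m \<or> b < d - m) \<longrightarrow> R a b = 0"
  shows "\<exists>V. \<forall>a<d. \<forall>b<d. R a b = (\<Sum>v\<leftarrow>V. v a * cnj (v b))"
  using assms
proof (induction m arbitrary: R)
  case 0
  then show ?case by (intro exI[of _ "[]"]) auto
next
  case (Suc m)
  define t where "t = d - Suc m"
  have t: "t < d" "d - m = Suc t" using Suc.prems(1) by (auto simp: t_def)
  have below: "\<forall>a<d. \<forall>b<d. (a < t \<or> b < t) \<longrightarrow> R a b = 0" using Suc.prems(3) by (auto simp: t_def)
  show ?case
  proof (cases "R t t = 0")
    case True
    have "R t b = 0" "R b t = 0" if "b < d" for b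
      using psd_form_zero_diag[OF Suc.prems(2) t(1) True that] psd_form_hermitian[OF Suc.prems(2) t(1) that]
      by simp_all
    then show ?thesis
      using Suc.IH[OF _ Suc.prems(2)] Suc.prems(1) below t(2) by (auto simp: less_Suc_eq)
  next
    case False
    define R' where "R' a b = R a b - R a t * R t b / R t t" for a b
    have "\<forall>a<d. \<forall>b<d. (a < d - m \<or> b < d - m) \<longrightarrow> R' a b = 0"
      using below t False by (auto simp: R'_def less_Suc_eq)
    then obtain V where V: "\<forall>a<d. \<forall>b<d. R' a b = (\<Sum>v\<leftarrow>V. v a * cnj (v b))"
      using Suc.IH psd_form_schur_complement[OF Suc.prems(2) t(1) False] Suc.prems(1)
      unfolding R'_def by fastforce
    define v where "v c = R c t / complex_of_real (sqrt (Re (R t t)))" for c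
    have "v a * cnj (v b) = R a t * R t b / R t t" if "b < d" for a b
      unfolding v_def using psd_form_pivot_outer[OF Suc.prems(2) t(1) that] .
    then have "\<forall>a<d. \<forall>b<d. R a b = (\<Sum>w\<leftarrow>v # V. w a * cnj (w b))"
      using V by (simp add: R'_def algebra_simps)
    then show ?thesis by blast
  qed
qed

lemma psd_form_gram: "psd_form d R \<Longrightarrow> \<exists>V. \<forall>a<d. \<forall>b<d. R a b = (\<Sum>v\<leftarrow>V. v a * cnj (v b))"
  using psd_form_gram_trailing_block[of d d R] by simp

lemma psd_mat_psd_form: "psd_mat d \<rho> \<Longrightarrow> psd_form d (\<lambda>a b. \<rho> $$ (a,b))"
  unfolding psd_form_def
proof
  fix x
  assume psd: "psd_mat d \<rho>"
  then have "\<rho> \<in> carrier_mat d d" by (simp add: psd_mat_def)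
  then have "conjugate (vec d x) \<bullet> (\<rho> *\<^sub>v vec d x) = sesq_form d (\<lambda>a b. \<rho> $$ (a,b)) x x"
    by (auto simp: sesq_form_def scalar_prod_def lessThan_atLeast0 sum_distrib_left mult.assoc
        intro!: sum.cong)
  then show "sesq_form d (\<lambda>a b. \<rho> $$ (a,b)) x x \<in> \<real> \<and> 0 \<le> Re (sesq_form d (\<lambda>a b. \<rho> $$ (a,b)) x x)"
    using psd by (auto simp: psd_mat_def dest!: bspec[of _ _ "vec d x"])
qed

lemma decomp_carrier:
  assumes "\<forall>(p,\<psi>)\<in>set D. unit_vec_d d \<psi>"
  shows "\<forall>A\<in>set (map (\<lambda>(p,\<psi>). complex_of_real p \<cdot>\<^sub>m proj \<psi>) D). A \<in> carrier_mat d d"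
  using assms by (auto simp: unit_vec_d_def proj_def)

lemma pure_decomp_carrier: "pure_decomp d \<rho> D \<Longrightarrow> \<rho> \<in> carrier_mat d d"
  unfolding pure_decomp_def using decomp_carrier msum_carrier by fast

lemma pure_decomp_index:
  assumes "pure_decomp d \<rho> D" "a < d" "b < d"
  shows "\<rho> $$ (a,b) = (\<Sum>(p,\<psi>)\<leftarrow>D. complex_of_real p * (\<psi> $ a * cnj (\<psi> $ b)))"
proof -
  have unit: "\<forall>(p,\<psi>)\<in>set D. unit_vec_d d \<psi>"
    and \<rho>: "\<rho> = msum d (map (\<lambda>(p,\<psi>). complex_of_real p \<cdot>\<^sub>m proj \<psi>) D)"
    using assms(1) by (auto simp: pure_decomp_def)
  have "\<rho> $$ (a,b) = (\<Sum>(p,\<psi>)\<leftarrow>D. (complex_of_real p \<cdot>\<^sub>m proj \<psi>) $$ (a,b))"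
    unfolding \<rho> using assms(2,3) decomp_carrier[OF unit] by (simp add: index_msum o_def case_prod_unfold)
  also have "\<dots> = (\<Sum>(p,\<psi>)\<leftarrow>D. complex_of_real p * (\<psi> $ a * cnj (\<psi> $ b)))"
    using unit assms(2,3) by (intro arg_cong[where f = sum_list] map_cong) (auto simp: unit_vec_d_def proj_def)
  finally show ?thesis .
qed

lemma unit_vec_normalize_vec: "0 < sqnorm d v \<Longrightarrow> unit_vec_d d (normalize_vec d v)"
  by (simp add: unit_vec_d_def sqnorm_normalize_vec sum_divide_distrib[symmetric] sqnorm_def[symmetric])
    (simp add: normalize_vec_def)

lemma outer_normalize_vec:
  assumes "0 < sqnorm d v" "a < d" "b < d"
  shows "complex_of_real (sqnorm d v) * (normalize_vec d v $ a * cnj (normalize_vec d v $ b)) = v a * cnj (v b)"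
proof -
  have "(complex_of_real (sqrt (sqnorm d v)))\<^sup>2 = complex_of_real (sqnorm d v)"
    using assms(1) by (simp flip: of_real_power)
  then show ?thesis
    using assms by (simp add: normalize_vec_def field_simps power2_eq_square)
qed

lemma sum_sqnorm_eq_trace:
  assumes "\<sigma> \<in> carrier_mat d d" "\<forall>a<d. \<forall>b<d. \<sigma> $$ (a,b) = (\<Sum>v\<leftarrow>V. v a * cnj (v b))"
  shows "(\<Sum>v\<leftarrow>V. sqnorm d v) = Re (mtrace \<sigma>)"
proof -
  have "Re (z * cnj z) = (cmod z)\<^sup>2" for z
    by (metis Re_complex_of_real complex_norm_square)
  then have "Re (\<sigma> $$ (i,i)) = (\<Sum>k<length V. (cmod ((V!k) i))\<^sup>2)" if "i < d" for i
    using assms(2) that by (simp add: sum_list_sum_nth lessThan_atLeast0 Re_sum)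
  then have "Re (mtrace \<sigma>) = (\<Sum>i<d. \<Sum>k<length V. (cmod ((V!k) i))\<^sup>2)"
    using assms(1) by (simp add: mtrace_def Re_sum)
  then show ?thesis
    by (simp add: sqnorm_def sum_list_sum_nth lessThan_atLeast0 sum.swap[of _ "{0..<length V}"])
qed

definition decomp_of_vectors :: "nat \<Rightarrow> (nat \<Rightarrow> complex) list \<Rightarrow> (real \<times> complex vec) list" where
  "decomp_of_vectors d V = map (\<lambda>v. (sqnorm d v, normalize_vec d v)) (filter (\<lambda>v. 0 < sqnorm d v) V)"

lemma pure_decomp_of_vectors:
  assumes "\<sigma> \<in> carrier_mat d d" "\<forall>a<d. \<forall>b<d. \<sigma> $$ (a,b) = (\<Sum>v\<leftarrow>V. v a * cnj (v b))"
    and "Re (mtrace \<sigma>) = 1"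
  shows "pure_decomp d \<sigma> (decomp_of_vectors d V)"
  unfolding pure_decomp_def
proof (intro conjI)
  let ?D = "decomp_of_vectors d V"
  show "\<forall>(p,\<psi>)\<in>set ?D. 0 < p \<and> unit_vec_d d \<psi>"
    by (auto simp: decomp_of_vectors_def unit_vec_normalize_vec)
  show "(\<Sum>(p,\<psi>)\<leftarrow>?D. p) = 1"
  proof -
    have "(\<Sum>v\<leftarrow>filter (\<lambda>v. 0 < sqnorm d v) V. sqnorm d v) = (\<Sum>v\<leftarrow>V. sqnorm d v)"
      by (rule sum_list_map_filter) (simp add: sqnorm_pos_iff)
    then show ?thesis
      using sum_sqnorm_eq_trace[OF assms(1,2)] assms(3) by (simp add: decomp_of_vectors_def o_def)
  qed
  show "\<sigma> = msum d (map (\<lambda>(p,\<psi>). complex_of_real p \<cdot>\<^sub>m proj \<psi>) ?D)"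
  proof (rule eq_matI)
    have carrier: "\<forall>A\<in>set (map (\<lambda>(p,\<psi>). complex_of_real p \<cdot>\<^sub>m proj \<psi>) ?D). A \<in> carrier_mat d d"
      by (auto simp: decomp_of_vectors_def normalize_vec_def proj_def)
    then show "dim_row \<sigma> = dim_row (msum d (map (\<lambda>(p,\<psi>). complex_of_real p \<cdot>\<^sub>m proj \<psi>) ?D))"
      "dim_col \<sigma> = dim_col (msum d (map (\<lambda>(p,\<psi>). complex_of_real p \<cdot>\<^sub>m proj \<psi>) ?D))"
      using assms(1) msum_carrier[OF carrier] by auto
    fix a b assume "a < dim_row (msum d (map (\<lambda>(p,\<psi>). complex_of_real p \<cdot>\<^sub>m proj \<psi>) ?D))"
      "b < dim_col (msum d (map (\<lambda>(p,\<psi>). complex_of_real p \<cdot>\<^sub>m proj \<psi>) ?D))"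
    then have ab: "a < d" "b < d" using msum_carrier[OF carrier] by auto
    have "\<sigma> $$ (a,b) = (\<Sum>v\<leftarrow>V. v a * cnj (v b))"
      using assms(2) ab by simp
    also have "\<dots> = (\<Sum>v\<leftarrow>filter (\<lambda>v. 0 < sqnorm d v) V. v a * cnj (v b))"
      using ab by (intro sum_list_map_filter[symmetric]) (simp add: sqnorm_pos_iff sqnorm_eq_0_iff)
    also have "\<dots> = (\<Sum>v\<leftarrow>filter (\<lambda>v. 0 < sqnorm d v) V.
        complex_of_real (sqnorm d v) * (normalize_vec d v $ a * cnj (normalize_vec d v $ b)))"
      using ab by (intro arg_cong[where f = sum_list] map_cong) (simp_all add: outer_normalize_vec)
    also have "\<dots> = msum d (map (\<lambda>(p,\<psi>). complex_of_real p \<cdot>\<^sub>m proj \<psi>) ?D) $$ (a,b)"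
      using ab carrier by (simp add: index_msum decomp_of_vectors_def o_def proj_def normalize_vec_def)
    finally show "\<sigma> $$ (a,b) = msum d (map (\<lambda>(p,\<psi>). complex_of_real p \<cdot>\<^sub>m proj \<psi>) ?D) $$ (a,b)" .
  qed
qed

lemma sum_decomp_of_vectors: "(\<Sum>(p,\<psi>)\<leftarrow>decomp_of_vectors d V. p * RI_pure \<psi>) = (\<Sum>v\<leftarrow>V. RI_scaled d v)"
  unfolding decomp_of_vectors_def RI_scaled_def
  by (auto simp: o_def sqnorm_pos_iff intro!: sum_list_map_filter)

lemma RI_le_decomp:
  assumes "pure_decomp d \<sigma> D"
  shows "RI d \<sigma> \<le> (\<Sum>(p,\<psi>)\<leftarrow>D. p * RI_pure \<psi>)"
  unfolding RI_def
proof (rule cInf_lower)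
  show "(\<Sum>(p,\<psi>)\<leftarrow>D. p * RI_pure \<psi>) \<in> {\<Sum>(p,\<psi>)\<leftarrow>D. p * RI_pure \<psi> |D. pure_decomp d \<sigma> D}"
    using assms by blast
  have "0 \<le> (\<Sum>(p,\<psi>)\<leftarrow>D'. p * RI_pure \<psi>)" if "pure_decomp d \<sigma> D'" for D'
  proof (intro sum_list_nonneg)
    fix x assume "x \<in> set (map (\<lambda>(p,\<psi>). p * RI_pure \<psi>) D')"
    then obtain p \<psi> where "(p,\<psi>) \<in> set D'" "x = p * RI_pure \<psi>" by auto
    with that show "0 \<le> x" by (auto simp: pure_decomp_def RI_pure_nonneg)
  qed
  then show "bdd_below {\<Sum>(p,\<psi>)\<leftarrow>D. p * RI_pure \<psi> |D. pure_decomp d \<sigma> D}"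
    by (intro bdd_belowI[of _ 0]) blast
qed

lemma RI_greatest:
  assumes "\<exists>D. pure_decomp d \<sigma> D" "\<And>D. pure_decomp d \<sigma> D \<Longrightarrow> c \<le> (\<Sum>(p,\<psi>)\<leftarrow>D. p * RI_pure \<psi>)"
  shows "c \<le> RI d \<sigma>"
  unfolding RI_def using assms by (intro cInf_greatest) auto

lemma RI_le_sum_RI_scaled:
  assumes "\<sigma> \<in> carrier_mat d d" "\<forall>a<d. \<forall>b<d. \<sigma> $$ (a,b) = (\<Sum>v\<leftarrow>V. v a * cnj (v b))"
    and "Re (mtrace \<sigma>) = 1"
  shows "RI d \<sigma> \<le> (\<Sum>v\<leftarrow>V. RI_scaled d v)"
  using RI_le_decomp[OF pure_decomp_of_vectors[OF assms]] by (simp only: sum_decomp_of_vectors)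

lemma density_mat_pure_decomp:
  assumes "density_mat d \<rho>"
  shows "\<exists>D. pure_decomp d \<rho> D"
proof -
  have psd: "psd_mat d \<rho>" and trace: "mtrace \<rho> = 1"
    using assms by (auto simp: density_mat_def)
  then have "\<rho> \<in> carrier_mat d d" by (simp add: psd_mat_def)
  moreover obtain V where V: "\<forall>a<d. \<forall>b<d. \<rho> $$ (a,b) = (\<Sum>v\<leftarrow>V. v a * cnj (v b))"
    using psd_form_gram[OF psd_mat_psd_form[OF psd]] by blast
  ultimately have "pure_decomp d \<rho> (decomp_of_vectors d V)"
    using trace by (intro pure_decomp_of_vectors) simp_all
  then show ?thesis ..
qed

lemma sum_list_sum_swap: "(\<Sum>x\<leftarrow>xs. \<Sum>i\<in>A. f x i) = (\<Sum>i\<in>A. \<Sum>x\<leftarrow>xs. f x i)"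
  by (induction xs) (simp_all add: sum.distrib)

lemma index_kraus_image_decomp:
  assumes "K \<in> carrier_mat d d" "pure_decomp d \<rho> D" "j < d" "k < d"
  shows "(K * \<rho> * mat_adjoint K) $$ (j,k) =
    (\<Sum>(p,\<psi>)\<leftarrow>D. complex_of_real p * (mat_apply d K (\<lambda>i. \<psi> $ i) j * cnj (mat_apply d K (\<lambda>i. \<psi> $ i) k)))"
proof -
  have "(K * \<rho> * mat_adjoint K) $$ (j,k) = (\<Sum>a<d. \<Sum>b<d. K $$ (j,a) * \<rho> $$ (a,b) * cnj (K $$ (k,b)))"
    using assms pure_decomp_carrier[OF assms(2)] by (intro index_mult_adjoint)
  also have "\<dots> = (\<Sum>a<d. \<Sum>b<d. \<Sum>(p,\<psi>)\<leftarrow>D.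
      complex_of_real p * (K $$ (j,a) * \<psi> $ a * cnj (K $$ (k,b) * \<psi> $ b)))"
  proof (intro sum.cong refl)
    fix a b assume "a \<in> {..<d}" "b \<in> {..<d}"
    then show "K $$ (j,a) * \<rho> $$ (a,b) * cnj (K $$ (k,b)) = (\<Sum>(p,\<psi>)\<leftarrow>D.
        complex_of_real p * (K $$ (j,a) * \<psi> $ a * cnj (K $$ (k,b) * \<psi> $ b)))"
      by (simp add: pure_decomp_index[OF assms(2)] case_prod_unfold
          flip: sum_list_const_mult sum_list_mult_const) (simp add: mult_ac)
  qed
  also have "\<dots> = (\<Sum>(p,\<psi>)\<leftarrow>D. \<Sum>a<d. \<Sum>b<d.
      complex_of_real p * (K $$ (j,a) * \<psi> $ a * cnj (K $$ (k,b) * \<psi> $ b)))"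
    by (simp only: case_prod_unfold sum_list_sum_swap)
  also have "\<dots> = (\<Sum>(p,\<psi>)\<leftarrow>D. complex_of_real p *
      (mat_apply d K (\<lambda>i. \<psi> $ i) j * cnj (mat_apply d K (\<lambda>i. \<psi> $ i) k)))"
    by (simp add: mat_apply_def sum_product case_prod_unfold) (simp add: sum_distrib_left mult_ac)
  finally show ?thesis .
qed

definition kraus_weight :: "complex mat \<Rightarrow> complex mat \<Rightarrow> real" where
  "kraus_weight K \<rho> = Re (mtrace (K * \<rho> * mat_adjoint K))"

definition kraus_post_state :: "complex mat \<Rightarrow> complex mat \<Rightarrow> complex mat" where
  "kraus_post_state K \<rho> = complex_of_real (1 / kraus_weight K \<rho>) \<cdot>\<^sub>m (K * \<rho> * mat_adjoint K)"

definition post_state_vectors ::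
    "nat \<Rightarrow> complex mat \<Rightarrow> real \<Rightarrow> (real \<times> complex vec) list \<Rightarrow> (nat \<Rightarrow> complex) list" where
  "post_state_vectors d K P D =
     map (\<lambda>(p,\<psi>) j. complex_of_real (sqrt (p / P)) * mat_apply d K (\<lambda>i. \<psi> $ i) j) D"

lemma kraus_post_state_gram:
  assumes K: "K \<in> carrier_mat d d" and D: "pure_decomp d \<rho> D" and P: "0 < kraus_weight K \<rho>"
    and "j < d" "k < d"
  shows "kraus_post_state K \<rho> $$ (j,k) = (\<Sum>v\<leftarrow>post_state_vectors d K (kraus_weight K \<rho>) D. v j * cnj (v k))"
proof -
  define P where "P = kraus_weight K \<rho>"
  let ?c = "\<lambda>\<psi> j. mat_apply d K (\<lambda>i. \<psi> $ i) j"
  have "dim_row (K * \<rho> * mat_adjoint K) = d" "dim_col (K * \<rho> * mat_adjoint K) = d"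
    using K pure_decomp_carrier[OF D] by (simp_all add: mat_adjoint_def)
  then have "kraus_post_state K \<rho> $$ (j,k) = complex_of_real (1 / P) * (K * \<rho> * mat_adjoint K) $$ (j,k)"
    using assms(4,5) by (simp add: kraus_post_state_def P_def del: index_mult_mat)
  also have "\<dots> = complex_of_real (1 / P) * (\<Sum>(p,\<psi>)\<leftarrow>D. complex_of_real p * (?c \<psi> j * cnj (?c \<psi> k)))"
    by (simp only: index_kraus_image_decomp[OF K D assms(4,5)])
  also have "\<dots> = (\<Sum>(p,\<psi>)\<leftarrow>D. complex_of_real (sqrt (p / P)) * ?c \<psi> j * cnj (complex_of_real (sqrt (p / P)) * ?c \<psi> k))"
  proof -
    have "complex_of_real (sqrt (p / P)) * ?c \<psi> j * cnj (complex_of_real (sqrt (p / P)) * ?c \<psi> k)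
        = complex_of_real (1 / P) * (complex_of_real p * (?c \<psi> j * cnj (?c \<psi> k)))" if "(p,\<psi>) \<in> set D" for p \<psi>
    proof -
      have "0 < p" using D that by (auto simp: pure_decomp_def)
      then have "(complex_of_real (sqrt (p / P)))\<^sup>2 = complex_of_real (p / P)"
        using P by (simp add: P_def flip: of_real_power)
      moreover have "complex_of_real (sqrt (p / P)) * ?c \<psi> j * cnj (complex_of_real (sqrt (p / P)) * ?c \<psi> k)
          = (complex_of_real (sqrt (p / P)))\<^sup>2 * (?c \<psi> j * cnj (?c \<psi> k))"
        by (simp add: power2_eq_square mult_ac)
      ultimately show ?thesis by simp
    qed
    then show ?thesis
      by (auto simp: case_prod_unfold simp flip: sum_list_const_mult intro!: arg_cong[where f = sum_list] map_cong)
  qed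
  finally show ?thesis
    by (simp add: post_state_vectors_def P_def o_def case_prod_unfold)
qed

lemma sum_RI_scaled_post_state_vectors:
  assumes "\<forall>(p,\<psi>)\<in>set D. 0 \<le> p" "0 < P"
  shows "(\<Sum>v\<leftarrow>post_state_vectors d K P D. RI_scaled d v)
    = 1 / P * (\<Sum>(p,\<psi>)\<leftarrow>D. p * RI_scaled d (mat_apply d K (\<lambda>i. \<psi> $ i)))"
proof -
  have "RI_scaled d (\<lambda>j. complex_of_real (sqrt (p / P)) * mat_apply d K (\<lambda>i. \<psi> $ i) j)
      = 1 / P * (p * RI_scaled d (mat_apply d K (\<lambda>i. \<psi> $ i)))" if "(p,\<psi>) \<in> set D" for p \<psi>
    using RI_scaled_scale[of "sqrt (p / P)"] assms that by auto
  then show ?thesis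
    by (auto simp: post_state_vectors_def o_def case_prod_unfold simp flip: sum_list_const_mult
        intro!: arg_cong[where f = sum_list] map_cong)
qed

text \<open>The vectors \<open>\<surd>(p\<^sub>e/p\<^sub>n) K\<^sub>n\<psi>\<^sub>e\<close> give a decomposition of the post-measurement state \<open>\<rho>\<^sub>n\<close>.\<close>
lemma RI_kraus_post_state_le:
  assumes K: "K \<in> carrier_mat d d" and D: "pure_decomp d \<rho> D" and P: "0 < kraus_weight K \<rho>"
  shows "kraus_weight K \<rho> * RI d (kraus_post_state K \<rho>)
    \<le> (\<Sum>(p,\<psi>)\<leftarrow>D. p * RI_scaled d (mat_apply d K (\<lambda>i. \<psi> $ i)))"
proof -
  have M: "K * \<rho> * mat_adjoint K \<in> carrier_mat d d"
    using K pure_decomp_carrier[OF D] by (intro mult_carrier_mat mat_adjoint_carrier)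
  have "Re (mtrace (kraus_post_state K \<rho>)) = 1"
    using M P by (simp add: kraus_post_state_def mtrace_smult kraus_weight_def)
  then have "RI d (kraus_post_state K \<rho>) \<le> (\<Sum>v\<leftarrow>post_state_vectors d K (kraus_weight K \<rho>) D. RI_scaled d v)"
    using M kraus_post_state_gram[OF K D P]
    by (intro RI_le_sum_RI_scaled) (simp_all add: kraus_post_state_def)
  also have "\<dots> = 1 / kraus_weight K \<rho> * (\<Sum>(p,\<psi>)\<leftarrow>D. p * RI_scaled d (mat_apply d K (\<lambda>i. \<psi> $ i)))"
    using D P by (intro sum_RI_scaled_post_state_vectors) (auto simp: pure_decomp_def)
  finally show ?thesis
    using P by (simp add: field_simps)
qed

lemma incoherent_kraus_RI_average_le_decomp:
  assumes kraus: "incoherent_kraus d Ks" and D: "pure_decomp d \<rho> D"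
  shows "(\<Sum>n\<in>{n. n < length Ks \<and> 0 < kraus_weight (Ks!n) \<rho>}.
      kraus_weight (Ks!n) \<rho> * RI d (kraus_post_state (Ks!n) \<rho>)) \<le> (\<Sum>(p,\<psi>)\<leftarrow>D. p * RI_pure \<psi>)"
proof -
  let ?S = "{n. n < length Ks \<and> 0 < kraus_weight (Ks!n) \<rho>}"
  let ?T = "\<lambda>n. \<Sum>(p,\<psi>)\<leftarrow>D. p * RI_scaled d (mat_apply d (Ks!n) (\<lambda>i. \<psi> $ i))"
  have p: "0 < p" "unit_vec_d d \<psi>" if "(p,\<psi>) \<in> set D" for p \<psi>
    using D that by (auto simp: pure_decomp_def)
  have "(\<Sum>n\<in>?S. kraus_weight (Ks!n) \<rho> * RI d (kraus_post_state (Ks!n) \<rho>)) \<le> (\<Sum>n\<in>?S. ?T n)"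
    using kraus_family_carrier[OF incoherent_kraus_imp_kraus_family[OF kraus]]
    by (intro sum_mono RI_kraus_post_state_le[OF _ D]) auto
  also have "\<dots> \<le> (\<Sum>n<length Ks. ?T n)"
    using p by (intro sum_mono2 sum_list_nonneg) (auto intro: mult_nonneg_nonneg RI_scaled_nonneg less_imp_le)
  also have "\<dots> = (\<Sum>(p,\<psi>)\<leftarrow>D. p * (\<Sum>n<length Ks. RI_scaled d (mat_apply d (Ks!n) (\<lambda>i. \<psi> $ i))))"
    by (simp add: case_prod_unfold sum_distrib_left flip: sum_list_sum_swap)
  also have "\<dots> \<le> (\<Sum>(p,\<psi>)\<leftarrow>D. p * RI_pure \<psi>)"
  proof (rule sum_list_mono, clarify)
    fix p \<psi> assume "(p,\<psi>) \<in> set D"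
    moreover from p[OF this] have "sqnorm d (\<lambda>i. \<psi> $ i) = 1"
      by (simp add: unit_vec_d_def sqnorm_def)
    ultimately show "p * (\<Sum>n<length Ks. RI_scaled d (mat_apply d (Ks!n) (\<lambda>i. \<psi> $ i))) \<le> p * RI_pure \<psi>"
      using p incoherent_kraus_RI_scaled_le[OF kraus] RI_scaled_unit_vec
      by (metis less_imp_le mult_left_mono)
  qed
  finally show ?thesis .
qed

theorem mainTheorem3:
  fixes d :: nat and Ks :: "complex mat list" and \<rho> :: "complex mat"
  assumes "incoherent_kraus d Ks"
    and "density_mat d \<rho>"
  shows "RI d \<rho> \<ge>
    (\<Sum>n \<in> {n. n < length Ks \<and> Re (mtrace (Ks!n * \<rho> * mat_adjoint (Ks!n))) > 0}.
       Re (mtrace (Ks!n * \<rho> * mat_adjoint (Ks!n))) *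
       RI d (complex_of_real (1 / Re (mtrace (Ks!n * \<rho> * mat_adjoint (Ks!n))))
               \<cdot>\<^sub>m (Ks!n * \<rho> * mat_adjoint (Ks!n))))"
  using density_mat_pure_decomp[OF assms(2)]
    incoherent_kraus_RI_average_le_decomp[OF assms(1), unfolded kraus_post_state_def kraus_weight_def]
  by (rule RI_greatest)

end
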